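(* Consider the Public WOM model described in the context with $k_{f\max}<\infty$, and suppose that in the original network the seller's optimal cutoff $\underline{k}^*$ satisfies $\Gamma(L(\underline{k}^* ))=1-\delta$ with $\delta<\dfrac{2c}{\underline{k}^*\,\phi(L(\underline{k}^* ),1/2)}$. Then there exist distributions $f'$ and $g'$ first-order stochastically dominating $f$ and $g$ respectively, and satisfying $(1-\beta)\sum_k kf'(k)=\beta\sum_k kg'(k)$, such that the seller's maximal profit in the denser network $(f',g')$ is higher than in the original network, while the fraction of uninformed consumers receiving the information at the seller's optimum in the denser network is strictly lower than $1-\delta$.
   Context: A seller (zero marginal cost) faces a unit mass of unit-demand consumers: a fraction $1-\beta\in(0,1)$ informed with reservation value 1 (charged $p_1=1$), and a fraction $\beta$ uninformed with reservation value $v\sim U[0,1]$ (charged $p_2$). Informed consumers are linked to uninformed ones by a directed bipartite network with out-degree distribution $f$ (informed) and in-degree distribution $g$ (uninformed) on the positive integers, with $(1-\beta)\sum_k kf(k)=\beta\sum_k kg(k)$; $k_{f\max}$ is the largest degree in the support of $f$. With a fraction $L$ of active links, $\Gamma(L)=1-\sum_k g(k)(1-L)^k$ and $\phi(L,p_2)=(1-p_2)\sum_k g(k)\frac{1-(1-L)^k}{kL}$. Public WOM: an informed consumer of out-degree $k$ informs all out-neighbours at lump-sum cost $c>0$ iff $kb\phi(L,p_2)\ge c$, where $b$ is the per-referral bonus; a cutoff $\underline{k}$ gives $L(\underline{k})=\sum_{k\ge\underline{k}}f(k)$ and is implemented by $b=c/(\underline{k}\phi(L(\underline{k}),p_2))$.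 The seller chooses $(p_2,\underline{k})$ to maximize $(1-\beta)+\beta\left(p_2-\frac{c}{\underline{k}\phi(L(\underline{k}),p_2)}\right)(1-p_2)\Gamma(L(\underline{k}))$ (the optimal price is $p_2=1/2$). A distribution $f'$ first-order stochastically dominates $f$ if $\sum_{k\ge\hat{k}}f'(k)\ge\sum_{k\ge\hat{k}}f(k)$ for all $\hat{k}$; in the denser network all quantities are computed with $f',g'$. *)

theory Defs
  imports Complex_Main
begin

definition degree_dist :: "(nat \<Rightarrow> real) \<Rightarrow> bool" where
  "degree_dist h \<longleftrightarrow> (\<forall>k. 0 \<le> h k) \<and> h 0 = 0 \<and> summable h \<and> suminf h = 1
     \<and> summable (\<lambda>k. real k * h k)"

definition mean_deg :: "(nat \<Rightarrow> real) \<Rightarrow> real" where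
  "mean_deg h = (\<Sum>k. real k * h k)"

definition tail :: "(nat \<Rightarrow> real) \<Rightarrow> nat \<Rightarrow> real" where
  "tail h kh = (\<Sum>k. if kh \<le> k then h k else 0)"

definition fosd :: "(nat \<Rightarrow> real) \<Rightarrow> (nat \<Rightarrow> real) \<Rightarrow> bool" where
  "fosd f' f \<longleftrightarrow> (\<forall>kh. tail f' kh \<ge> tail f kh)"

text \<open>Fraction of active links for cutoff kc: L(kc) = sum_{k >= kc} f(k).\<close>
definition Lcut :: "(nat \<Rightarrow> real) \<Rightarrow> nat \<Rightarrow> real" where
  "Lcut f kc = tail f kc"

definition Gamma :: "(nat \<Rightarrow> real) \<Rightarrow> real \<Rightarrow> real" where
  "Gamma g L = 1 - (\<Sum>k. g k * (1 - L) ^ k)"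

definition phi :: "(nat \<Rightarrow> real) \<Rightarrow> real \<Rightarrow> real \<Rightarrow> real" where
  "phi g L p = (1 - p) * (\<Sum>k. g k * (1 - (1 - L) ^ k) / (real k * L))"

text \<open>Seller's profit with price p for uninformed and cutoff kc.\<close>
definition profit :: "real \<Rightarrow> real \<Rightarrow> (nat \<Rightarrow> real) \<Rightarrow> (nat \<Rightarrow> real) \<Rightarrow> real \<Rightarrow> nat \<Rightarrow> real" where
  "profit \<beta> c f g p kc = (1 - \<beta>) + \<beta> * (p - c / (real kc * phi g (Lcut f kc) p)) * (1 - p)
      * Gamma g (Lcut f kc)"

definition is_optimum :: "real \<Rightarrow> real \<Rightarrow> (nat \<Rightarrow> real) \<Rightarrow> (nat \<Rightarrow> real) \<Rightarrow> real \<Rightarrow> nat \<Rightarrow> bool" where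
  "is_optimum \<beta> c f g p kc \<longleftrightarrow> 0 < p \<and> p < 1 \<and> 1 \<le> kc \<and>
     (\<forall>p' kc'. 0 < p' \<and> p' < 1 \<and> 1 \<le> kc' \<longrightarrow> profit \<beta> c f g p' kc' \<le> profit \<beta> c f g p kc)"

end

theory Submission
  imports Defs "HOL-Real_Asymp.Real_Asymp"
begin

text \<open>
Informed consumers get out-degree K, beyond the support of
f, except for a small fraction e with a huge out-degree K'. The in-degree distribution g is
shifted by s, and for a fraction w of the uninformed consumers by a huge M.

A cutoff at most K activates all links; but then every uninformed consumer has more than s
referrers, so a referral yields at most 1/(s + 1) sales and, once s > K/(4c), the referral cost
exceeds the largest margin p (1 - p) = 1/4. A cutoff above K' activates no link. A cutoff in
(K, K'] activates the fraction e of the links: if e (mean g + s) and (1 - e)^M are small, the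
consumers shifted by s are almost never reached and those shifted by M almost surely, so the reach
is close to w, while the referral cost c/(K' phi) is negligible. With w slightly below 1 - delta
the seller reaches fewer consumers but saves almost the whole referral cost q = c/(k* phi) > 0 of
the original optimum, whose profit is 1 - beta + beta (1 - delta) (1/4 - q/2).

The balance of mean degrees is restored by solving for e, letting M and K' = t M tend to infinity.
\<close>

section \<open>Degree distributions\<close>

lemma degree_dist_nonneg: "degree_dist g \<Longrightarrow> 0 \<le> g k"
  and degree_dist_zero: "degree_dist g \<Longrightarrow> g 0 = 0"
  and degree_dist_sums: "degree_dist g \<Longrightarrow> g sums 1"
  and suminf_degree_dist: "degree_dist g \<Longrightarrow> suminf g = 1"
  and degree_dist_mean_sums: "degree_dist g \<Longrightarrow> (\<lambda>k. real k * g k) sums mean_deg g"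
  by (auto simp: degree_dist_def mean_deg_def sums_iff)

lemma degree_dist_pos_imp_ge_one: "degree_dist g \<Longrightarrow> 0 < g k \<Longrightarrow> 1 \<le> k"
  by (cases k) (auto simp: degree_dist_zero)

lemma degree_dist_obtains_pos:
  assumes "degree_dist g"
  obtains k where "1 \<le> k" "0 < g k"
proof -
  have "g \<noteq> (\<lambda>_. 0)"
    using suminf_degree_dist[OF assms] by auto
  then obtain k where "g k \<noteq> 0" by auto
  then show thesis
    using that degree_dist_nonneg[OF assms, of k] degree_dist_pos_imp_ge_one[OF assms, of k]
    by (simp add: less_le)
qed

lemma mean_deg_nonneg: "degree_dist g \<Longrightarrow> 0 \<le> mean_deg g"
  unfolding mean_deg_def by (intro suminf_nonneg) (auto simp: degree_dist_def)

lemma degree_dist_summable_bounded: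
  assumes "degree_dist g" "\<And>k. \<bar>h k\<bar> \<le> C"
  shows "summable (\<lambda>k. g k * h k)"
proof (rule summable_comparison_test')
  show "summable (\<lambda>k. g k * C)"
    using degree_dist_sums[OF assms(1)] by (simp add: sums_iff summable_mult2)
  show "norm (g k * h k) \<le> g k * C" for k
    using assms degree_dist_nonneg[OF assms(1), of k] by (simp add: abs_mult mult_left_mono)
qed

lemma degree_dist_suminf_mono:
  assumes "degree_dist g" "\<And>k. \<bar>h k\<bar> \<le> C" "\<And>k. \<bar>h' k\<bar> \<le> C'"
    and "\<And>k. 0 < g k \<Longrightarrow> h k \<le> h' k"
  shows "(\<Sum>k. g k * h k) \<le> (\<Sum>k. g k * h' k)"
proof (rule suminf_le)
  show "g k * h k \<le> g k * h' k" for k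
    using assms degree_dist_nonneg[OF assms(1), of k]
    by (cases "g k = 0") (auto intro: mult_left_mono)
qed (use assms degree_dist_summable_bounded in blast)+

lemma tail_eq_suminf: "tail g kh = (\<Sum>k. g k * of_bool (kh \<le> k))"
  unfolding tail_def by (intro arg_cong[where f = suminf]) auto

definition mix_dist :: "real \<Rightarrow> (nat \<Rightarrow> real) \<Rightarrow> (nat \<Rightarrow> real) \<Rightarrow> nat \<Rightarrow> real" where
  "mix_dist w a b k = (1 - w) * a k + w * b k"

definition point_dist :: "nat \<Rightarrow> nat \<Rightarrow> real" where
  "point_dist K k = of_bool (k = K)"

definition shift_dist :: "nat \<Rightarrow> (nat \<Rightarrow> real) \<Rightarrow> nat \<Rightarrow> real" where
  "shift_dist s g k = (if s \<le> k then g (k - s) else 0)"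

lemma sums_mix_dist:
  assumes "(\<lambda>k. a k * h k) sums A" "(\<lambda>k. b k * h k) sums B"
  shows "(\<lambda>k. mix_dist w a b k * h k) sums ((1 - w) * A + w * B)"
proof -
  have "(\<lambda>k. (1 - w) * (a k * h k) + w * (b k * h k)) sums ((1 - w) * A + w * B)"
    by (intro sums_add sums_mult assms)
  then show ?thesis by (simp add: mix_dist_def algebra_simps)
qed

lemma sums_point_dist: "(\<lambda>k. point_dist K k * h k) sums h K"
proof -
  have "(\<lambda>k. point_dist K k * h k) = (\<lambda>k. if k = K then h k else 0)"
    by (auto simp: point_dist_def)
  then show ?thesis using sums_single[of K h] by simp
qed

lemma sums_shift_dist:
  assumes "(\<lambda>i. g i * h (i + s)) sums S"
  shows "(\<lambda>k. shift_dist s g k * h k) sums S"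
  using assms by (subst sums_zero_iff_shift[symmetric, of s]) (auto simp: shift_dist_def)

lemma degree_dist_of_sums:
  assumes "\<And>k. 0 \<le> g k" "g 0 = 0" "(\<lambda>k. g k * 1) sums 1" "(\<lambda>k. g k * real k) sums m"
  shows "degree_dist g" "mean_deg g = m"
  using assms by (auto simp: degree_dist_def mean_deg_def sums_iff mult.commute)

lemma
  assumes "degree_dist a" "degree_dist b" "0 \<le> w" "w \<le> 1"
  shows degree_dist_mix_dist: "degree_dist (mix_dist w a b)"
    and mean_deg_mix_dist: "mean_deg (mix_dist w a b) = (1 - w) * mean_deg a + w * mean_deg b"
proof -
  have "(\<lambda>k. mix_dist w a b k * 1) sums ((1 - w) * 1 + w * 1)"
    using assms by (intro sums_mix_dist) (auto simp: degree_dist_sums)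
  moreover have "(\<lambda>k. mix_dist w a b k * real k) sums ((1 - w) * mean_deg a + w * mean_deg b)"
    using assms by (intro sums_mix_dist) (auto simp: mult.commute degree_dist_mean_sums)
  ultimately show "degree_dist (mix_dist w a b)"
    and "mean_deg (mix_dist w a b) = (1 - w) * mean_deg a + w * mean_deg b"
    using assms by (intro degree_dist_of_sums; force simp: mix_dist_def degree_dist_zero degree_dist_nonneg)+
qed

lemma tail_mix_dist:
  assumes "degree_dist a" "degree_dist b"
  shows "tail (mix_dist w a b) kh = (1 - w) * tail a kh + w * tail b kh"
proof -
  have "(\<lambda>k. mix_dist w a b k * of_bool (kh \<le> k)) sums ((1 - w) * tail a kh + w * tail b kh)"
    unfolding tail_eq_suminf
    by (intro sums_mix_dist summable_sums[OF degree_dist_summable_bounded[where C = 1]] assms) auto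
  then show ?thesis by (simp add: tail_eq_suminf sums_iff)
qed

lemma fosd_mix_dist:
  assumes "degree_dist a" "degree_dist b" "0 \<le> w" "w \<le> 1" "fosd a g" "fosd b g"
  shows "fosd (mix_dist w a b) g"
  unfolding fosd_def
proof
  fix kh
  have "tail g kh = (1 - w) * tail g kh + w * tail g kh" by (simp add: algebra_simps)
  also have "\<dots> \<le> (1 - w) * tail a kh + w * tail b kh"
    using assms by (intro add_mono mult_left_mono) (auto simp: fosd_def)
  finally show "tail g kh \<le> tail (mix_dist w a b) kh" by (simp add: tail_mix_dist assms)
qed

lemma
  assumes "1 \<le> K"
  shows degree_dist_point_dist: "degree_dist (point_dist K)"
    and mean_deg_point_dist: "mean_deg (point_dist K) = K"
proof -
  have "\<And>k. 0 \<le> point_dist K k" "point_dist K 0 = 0"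
    using assms by (auto simp: point_dist_def)
  from degree_dist_of_sums[OF this sums_point_dist sums_point_dist]
  show "degree_dist (point_dist K)" "mean_deg (point_dist K) = K" by simp_all
qed

lemma tail_point_dist: "tail (point_dist K) kh = of_bool (kh \<le> K)"
  using sums_point_dist[of K "\<lambda>k. of_bool (kh \<le> k)"] by (simp add: tail_eq_suminf sums_iff)

lemma tail_nonneg: "degree_dist g \<Longrightarrow> 0 \<le> tail g kh"
  unfolding tail_eq_suminf
  by (intro suminf_nonneg degree_dist_summable_bounded[where C = 1]) (auto simp: degree_dist_nonneg)

lemma tail_le_one:
  assumes "degree_dist g"
  shows "tail g kh \<le> 1"
  using degree_dist_suminf_mono[OF assms, of "\<lambda>k. of_bool (kh \<le> k)" 1 "\<lambda>_. 1" 1]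
    degree_dist_sums[OF assms]
  by (simp add: tail_eq_suminf sums_iff)

lemma fosd_point_dist:
  assumes "degree_dist f" "\<And>k. K < k \<Longrightarrow> f k = 0"
  shows "fosd (point_dist K) f"
  unfolding fosd_def
proof
  fix kh
  show "tail f kh \<le> tail (point_dist K) kh"
  proof (cases "kh \<le> K")
    case False
    then have "(\<lambda>k. if kh \<le> k then f k else 0) = (\<lambda>_. 0)"
      using assms(2) by auto
    then have "tail f kh = 0" by (simp add: tail_def)
    then show ?thesis by (simp add: tail_point_dist)
  qed (simp add: tail_point_dist tail_le_one assms(1))
qed

lemma
  assumes "degree_dist g"
  shows degree_dist_shift_dist: "degree_dist (shift_dist s g)"
    and mean_deg_shift_dist: "mean_deg (shift_dist s g) = mean_deg g + s"
proof -
  have "(\<lambda>k. shift_dist s g k * 1) sums 1"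
    using sums_shift_dist[of g "\<lambda>_. 1"] degree_dist_sums[OF assms] by simp
  moreover have "(\<lambda>k. shift_dist s g k * real k) sums (mean_deg g + s)"
    by (rule sums_shift_dist)
      (use sums_add[OF degree_dist_mean_sums[OF assms] sums_mult[OF degree_dist_sums[OF assms], of s]]
        in \<open>simp add: algebra_simps\<close>)
  moreover have "\<And>k. 0 \<le> shift_dist s g k" "shift_dist s g 0 = 0"
    using assms by (auto simp: shift_dist_def degree_dist_nonneg degree_dist_zero)
  ultimately show "degree_dist (shift_dist s g)" "mean_deg (shift_dist s g) = mean_deg g + s"
    using degree_dist_of_sums by blast+
qed

lemma shift_dist_eq_zero: "degree_dist g \<Longrightarrow> k \<le> s \<Longrightarrow> shift_dist s g k = 0"
  by (auto simp: shift_dist_def degree_dist_zero)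

lemma fosd_shift_dist:
  assumes "degree_dist g"
  shows "fosd (shift_dist s g) g"
  unfolding fosd_def
proof
  fix kh
  have "(\<lambda>k. shift_dist s g k * of_bool (kh \<le> k)) sums (\<Sum>i. g i * of_bool (kh \<le> i + s))"
    by (intro sums_shift_dist summable_sums[OF degree_dist_summable_bounded[OF assms, where C = 1]]) auto
  moreover have "(\<Sum>i. g i * of_bool (kh \<le> i)) \<le> (\<Sum>i. g i * of_bool (kh \<le> i + s))"
    by (rule degree_dist_suminf_mono[OF assms, where C = 1 and C' = 1]) auto
  ultimately show "tail g kh \<le> tail (shift_dist s g) kh"
    by (simp add: tail_eq_suminf sums_iff)
qed

section \<open>Reach and referral yield\<close>

definition pgf :: "(nat \<Rightarrow> real) \<Rightarrow> real \<Rightarrow> real" where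
  "pgf g x = (\<Sum>k. g k * x ^ k)"

lemma Gamma_eq_pgf: "Gamma g L = 1 - pgf g (1 - L)"
  by (simp add: Gamma_def pgf_def)

lemma pgf_sums: "degree_dist g \<Longrightarrow> \<bar>x\<bar> \<le> 1 \<Longrightarrow> (\<lambda>k. g k * x ^ k) sums pgf g x"
  unfolding pgf_def
  by (rule summable_sums[OF degree_dist_summable_bounded[where C = 1]])
    (auto simp: power_abs intro: power_le_one)

lemma pgf_nonneg: "degree_dist g \<Longrightarrow> 0 \<le> x \<Longrightarrow> x \<le> 1 \<Longrightarrow> 0 \<le> pgf g x"
  unfolding pgf_def by (intro suminf_nonneg degree_dist_summable_bounded[where C = 1])
    (auto simp: degree_dist_nonneg power_le_one)

lemma pgf_le_one:
  assumes "degree_dist g" "0 \<le> x" "x \<le> 1"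
  shows "pgf g x \<le> 1"
  using degree_dist_suminf_mono[OF assms(1), of "\<lambda>k. x ^ k" 1 "\<lambda>_. 1" 1] assms
  by (simp add: pgf_def suminf_degree_dist power_le_one)

lemma pgf_shift_dist:
  assumes "degree_dist g" "\<bar>x\<bar> \<le> 1"
  shows "pgf (shift_dist s g) x = x ^ s * pgf g x"
proof -
  have "(\<lambda>i. g i * x ^ (i + s)) sums (x ^ s * pgf g x)"
    using sums_mult[OF pgf_sums[OF assms], of "x ^ s"] by (simp add: power_add algebra_simps)
  then show ?thesis
    using sums_shift_dist[of g "\<lambda>k. x ^ k"] by (simp add: pgf_def sums_iff)
qed

lemma Gamma_mix_dist:
  assumes "degree_dist a" "degree_dist b" "0 \<le> L" "L \<le> 1"
  shows "Gamma (mix_dist w a b) L = (1 - w) * Gamma a L + w * Gamma b L"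
proof -
  have "(\<lambda>k. mix_dist w a b k * (1 - L) ^ k) sums ((1 - w) * pgf a (1 - L) + w * pgf b (1 - L))"
    using assms by (intro sums_mix_dist pgf_sums) auto
  then show ?thesis
    by (simp add: Gamma_def pgf_def sums_iff algebra_simps)
qed

lemma
  assumes "degree_dist g" "0 \<le> L" "L \<le> 1"
  shows Gamma_nonneg: "0 \<le> Gamma g L"
    and Gamma_le_one: "Gamma g L \<le> 1"
  using assms pgf_le_one[of g "1 - L"] pgf_nonneg[of g "1 - L"] by (simp_all add: Gamma_eq_pgf)

lemma Gamma_zero: "degree_dist g \<Longrightarrow> Gamma g 0 = 0"
  by (simp add: Gamma_def suminf_degree_dist)

lemma Gamma_one: "degree_dist g \<Longrightarrow> Gamma g 1 = 1"
  using pgf_sums[of g 0] sums_single[of 0 g]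
  by (simp add: Gamma_eq_pgf degree_dist_zero sums_iff)

lemma Gamma_ge_self:
  assumes "degree_dist g" "0 \<le> L" "L \<le> 1"
  shows "L \<le> Gamma g L"
proof -
  have "pgf g (1 - L) \<le> (\<Sum>k. g k * (1 - L))"
    unfolding pgf_def using assms
    by (intro degree_dist_suminf_mono[where C = 1 and C' = 1])
      (use power_decreasing[of 1 _ "1 - L"] degree_dist_pos_imp_ge_one[OF assms(1)] in
        \<open>auto simp: power_le_one\<close>)
  moreover have "(\<Sum>k. g k * (1 - L)) = 1 - L"
    using suminf_mult2[of g "1 - L"] assms(1) by (simp add: degree_dist_def)
  ultimately show ?thesis by (simp add: Gamma_eq_pgf)
qed

lemma Gamma_le_mult_mean:
  assumes "degree_dist g" "0 \<le> L" "L \<le> 1"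
  shows "Gamma g L \<le> L * mean_deg g"
proof -
  have lin: "(\<lambda>k. g k * (1 - real k * L)) sums (1 - L * mean_deg g)"
    using sums_diff[OF degree_dist_sums[OF assms(1)] sums_mult[OF degree_dist_mean_sums[OF assms(1)], of L]]
    by (simp add: algebra_simps)
  have le: "g k * (1 - real k * L) \<le> g k * (1 - L) ^ k" for k
  proof -
    have "1 - real k * L \<le> (1 - L) ^ k"
      using Bernoulli_inequality[of "- L" k] assms by simp
    then show ?thesis by (intro mult_left_mono degree_dist_nonneg assms(1))
  qed
  have "(\<lambda>k. g k * (1 - L) ^ k) sums pgf g (1 - L)"
    using assms by (intro pgf_sums) auto
  with le lin have "1 - L * mean_deg g \<le> pgf g (1 - L)"
    by (rule sums_le)
  then show ?thesis by (simp add: Gamma_eq_pgf)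
qed

lemma Gamma_shift_dist_ge:
  assumes "degree_dist g" "0 \<le> L" "L \<le> 1"
  shows "1 - (1 - L) ^ s \<le> Gamma (shift_dist s g) L"
proof -
  have "(1 - L) ^ s * pgf g (1 - L) \<le> (1 - L) ^ s"
    using assms pgf_le_one[of g "1 - L"] by (intro mult_left_le) auto
  then show ?thesis
    using assms by (simp add: Gamma_eq_pgf pgf_shift_dist)
qed

definition phi_base :: "(nat \<Rightarrow> real) \<Rightarrow> real \<Rightarrow> real" where
  "phi_base g L = (\<Sum>k. g k * (1 - (1 - L) ^ k) / (real k * L))"

lemma phi_eq: "phi g L p = (1 - p) * phi_base g L"
  by (simp add: phi_def phi_base_def)

lemma phi_base_zero: "phi_base g 0 = 0"
  by (simp add: phi_base_def)

lemma one_sub_power_le: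
  fixes L :: real
  assumes "0 \<le> L" "L \<le> 1"
  shows "1 - (1 - L) ^ k \<le> real k * L"
  using Bernoulli_inequality[of "- L" k] assms by simp

lemma mult_power_le_one_sub_power:
  fixes L :: real
  assumes "0 \<le> L" "L \<le> 1"
  shows "real k * L * (1 - L) ^ k \<le> 1 - (1 - L) ^ k"
proof -
  have "real k * (1 - L) ^ k = (\<Sum>i<k. (1 - L) ^ k)" by simp
  also have "\<dots> \<le> (\<Sum>i<k. (1 - L) ^ i)"
    using assms by (intro sum_mono power_decreasing) auto
  finally have "L * (real k * (1 - L) ^ k) \<le> L * (\<Sum>i<k. (1 - L) ^ i)"
    using assms by (intro mult_left_mono) auto
  also have "\<dots> = 1 - (1 - L) ^ k"
    using one_diff_power_eq[of "1 - L" k] by simp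
  finally show ?thesis by (simp add: algebra_simps)
qed

lemma
  fixes L :: real
  assumes "0 < L" "L \<le> 1" "1 \<le> k"
  shows one_sub_power_div_le_one: "(1 - (1 - L) ^ k) / (real k * L) \<le> 1"
    and power_le_one_sub_power_div: "(1 - L) ^ k \<le> (1 - (1 - L) ^ k) / (real k * L)"
  using one_sub_power_le[of L k] mult_power_le_one_sub_power[of L k] assms
  by (simp_all add: field_simps)

lemma one_sub_power_div_nonneg:
  fixes L :: real
  assumes "0 < L" "L \<le> 1"
  shows "0 \<le> (1 - (1 - L) ^ k) / (real k * L)"
  using assms power_le_one[of "1 - L" k] by simp

lemma abs_one_sub_power_div_le_one:
  fixes L :: real
  assumes "0 < L" "L \<le> 1"
  shows "\<bar>(1 - (1 - L) ^ k) / (real k * L)\<bar> \<le> 1"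
proof (cases "k = 0")
  case False
  then show ?thesis
    using one_sub_power_div_le_one[of L k] one_sub_power_div_nonneg[of L k] assms
    by (metis abs_of_nonneg less_one not_le)
qed simp

lemma one_sub_Gamma_le_phi_base:
  assumes "degree_dist g" "0 < L" "L \<le> 1"
  shows "1 - Gamma g L \<le> phi_base g L"
proof -
  have "(\<Sum>k. g k * (1 - L) ^ k) \<le> (\<Sum>k. g k * ((1 - (1 - L) ^ k) / (real k * L)))"
  proof (rule degree_dist_suminf_mono[OF assms(1), where C = 1 and C' = 1])
    show "\<bar>(1 - L) ^ k\<bar> \<le> 1" for k
      using assms by (simp add: power_le_one)
    show "\<bar>(1 - (1 - L) ^ k) / (real k * L)\<bar> \<le> 1" for k
      using assms(2,3) by (rule abs_one_sub_power_div_le_one)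
    show "(1 - L) ^ k \<le> (1 - (1 - L) ^ k) / (real k * L)" if "0 < g k" for k
      using assms degree_dist_pos_imp_ge_one[OF assms(1) that] by (intro power_le_one_sub_power_div)
  qed
  then show ?thesis by (simp add: Gamma_def phi_base_def)
qed

lemma phi_base_pos:
  assumes "degree_dist g" "0 < L" "L \<le> 1"
  shows "0 < phi_base g L"
proof -
  obtain k where gk: "1 \<le> k" "0 < g k"
    using degree_dist_obtains_pos[OF assms(1)] .
  have "(1 - L) ^ k < 1"
    using assms gk by (simp add: power_less_one_iff)
  then have "0 < g k * ((1 - (1 - L) ^ k) / (real k * L))"
    using assms gk by simp
  moreover have "0 \<le> g i * ((1 - (1 - L) ^ i) / (real i * L))" for i
    using degree_dist_nonneg[OF assms(1)] one_sub_power_div_nonneg[OF assms(2,3)] by (rule mult_nonneg_nonneg)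
  ultimately have "0 < (\<Sum>i. g i * ((1 - (1 - L) ^ i) / (real i * L)))"
    using abs_one_sub_power_div_le_one[OF assms(2,3)]
    by (intro suminf_pos2 degree_dist_summable_bounded[OF assms(1)])
  then show ?thesis by (simp add: phi_base_def)
qed

lemma phi_base_one_le:
  assumes "degree_dist g" "\<And>k. k \<le> s \<Longrightarrow> g k = 0"
  shows "phi_base g 1 \<le> 1 / (real s + 1)"
proof -
  have "(\<Sum>k. g k * ((1 - 0 ^ k) / real k)) \<le> (\<Sum>k. g k * (1 / (real s + 1)))"
  proof (rule degree_dist_suminf_mono[OF assms(1), where C = 1 and C' = 1])
    show "\<bar>(1 - 0 ^ k) / real k\<bar> \<le> (1::real)" for k
      by (cases k) auto
    show "(1 - 0 ^ k) / real k \<le> 1 / (real s + 1)" if "0 < g k" for k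
    proof -
      have "s < k" using assms(2)[of k] that by (metis less_irrefl not_le)
      then show ?thesis by (simp add: frac_le)
    qed
  qed simp
  also have "\<dots> = 1 / (real s + 1)"
    using suminf_divide[of g "real s + 1"] assms(1) by (simp add: degree_dist_def)
  finally show ?thesis by (simp add: phi_base_def)
qed

section \<open>The seller's problem\<close>

lemma mult_one_minus_le_quarter: "p * (1 - p) \<le> (1 / 4 :: real)"
  using zero_le_power2[of "p - 1 / 2"] by (simp add: power2_eq_square algebra_simps)

lemma profit_eq:
  assumes "0 < p" "p < 1"
  shows "profit \<beta> c f g p kc = 1 - \<beta> + \<beta> * Gamma g (Lcut f kc) *
    (p * (1 - p) - c / (real kc * phi_base g (Lcut f kc)))"
proof -
  define H where "H = phi_base g (Lcut f kc)"
  have eq: "(p - c / (real kc * ((1 - p) * H))) * (1 - p) = p * (1 - p) - c / (real kc * H)"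
    using assms by (cases "real kc * H = 0") (auto simp: field_simps)
  have "profit \<beta> c f g p kc
      = 1 - \<beta> + \<beta> * ((p - c / (real kc * ((1 - p) * H))) * (1 - p)) * Gamma g (Lcut f kc)"
    unfolding profit_def phi_eq H_def by (simp add: mult.assoc)
  from this[unfolded eq] show ?thesis by (simp add: H_def ac_simps)
qed

lemma profit_lt_of_Lcut_eq_one:
  assumes g: "degree_dist g" "\<And>k. k \<le> s \<Longrightarrow> g k = 0"
    and L: "Lcut f kc = 1" and kc: "1 \<le> kc" "real kc < 4 * c * (real s + 1)"
    and p: "0 < p" "p < 1" and "0 < \<beta>"
  shows "profit \<beta> c f g p kc < 1 - \<beta>"
proof -
  define H where "H = phi_base g 1"
  have H: "0 < H" "H \<le> 1 / (real s + 1)"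
    unfolding H_def using phi_base_pos[OF g(1)] phi_base_one_le[OF g] by auto
  have "real kc * H \<le> real kc / (real s + 1)"
    using mult_left_mono[OF H(2), of "real kc"] by simp
  also have "\<dots> < 4 * c"
    using kc by (simp add: field_simps)
  finally have "1 / 4 < c / (real kc * H)"
    using H kc by (simp add: field_simps)
  then have "p * (1 - p) - c / (real kc * H) < 0"
    using mult_one_minus_le_quarter[of p] by linarith
  then show ?thesis
    using \<open>0 < \<beta>\<close> by (simp add: profit_eq[OF p] L Gamma_one g(1) H_def mult_pos_neg)
qed

lemma profit_eq_of_Lcut_eq_zero:
  "degree_dist g \<Longrightarrow> Lcut f kc = 0 \<Longrightarrow> 0 < p \<Longrightarrow> p < 1 \<Longrightarrow> profit \<beta> c f g p kc = 1 - \<beta>"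
  by (simp add: profit_eq Gamma_zero)

lemma profit_le_of_Lcut_eq:
  assumes L: "Lcut f kc = Lcut f K" and kc: "1 \<le> kc" "kc \<le> K" and p: "0 < p" "p < 1"
    and "0 \<le> \<beta>" "0 \<le> c" "0 \<le> Gamma g (Lcut f K)" "0 < phi_base g (Lcut f K)"
  shows "profit \<beta> c f g p kc \<le> profit \<beta> c f g (1 / 2) K"
proof -
  have "c / (real K * phi_base g (Lcut f K)) \<le> c / (real kc * phi_base g (Lcut f K))"
    using assms by (intro divide_left_mono mult_right_mono mult_pos_pos) auto
  then have "p * (1 - p) - c / (real kc * phi_base g (Lcut f K))
      \<le> 1 / 4 - c / (real K * phi_base g (Lcut f K))"
    using mult_one_minus_le_quarter[of p] by linarith
  then have "\<beta> * Gamma g (Lcut f K) * (p * (1 - p) - c / (real kc * phi_base g (Lcut f K)))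
      \<le> \<beta> * Gamma g (Lcut f K) * (1 / 4 - c / (real K * phi_base g (Lcut f K)))"
    using assms by (intro mult_left_mono) auto
  then show ?thesis
    using p by (simp add: profit_eq L)
qed

context
  fixes \<beta> c e :: real and f g :: "nat \<Rightarrow> real" and s K K' :: nat
  assumes \<beta>: "0 < \<beta>" and c: "0 < c" and g: "degree_dist g" "\<And>k. k \<le> s \<Longrightarrow> g k = 0"
    and K: "real K < 4 * c * (real s + 1)" "K < K'"
    and L: "\<And>kc. Lcut f kc = (if kc \<le> K then 1 else if kc \<le> K' then e else 0)"
    and e: "0 < e" "e \<le> 1" and cost: "c / (real K' * phi_base g e) < 1 / 4"
begin

lemma profit_le_three_level_Lcut:
  assumes p: "0 < p" "p < 1" and k: "1 \<le> k"
  shows "profit \<beta> c f g p k \<le> profit \<beta> c f g (1 / 2) K'"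
    and "profit \<beta> c f g (1 / 2) K' \<le> profit \<beta> c f g p k \<Longrightarrow> Lcut f k = e"
proof -
  have LK': "Lcut f K' = e" using L K by simp
  have Gamma: "0 < Gamma g e" using Gamma_ge_self[OF g(1)] e by (metis less_le_trans less_imp_le)
  have phi: "0 < phi_base g e" using phi_base_pos[OF g(1) e] .
  have top: "1 - \<beta> < profit \<beta> c f g (1 / 2) K'"
    using \<beta> Gamma cost by (simp add: profit_eq LK')
  consider "k \<le> K" | "K < k" "k \<le> K'" | "K' < k" by linarith
  then have "profit \<beta> c f g p k \<le> profit \<beta> c f g (1 / 2) K' \<and>
    (profit \<beta> c f g (1 / 2) K' \<le> profit \<beta> c f g p k \<longrightarrow> Lcut f k = e)"
  proof cases
    case 1
    then have "profit \<beta> c f g p k < 1 - \<beta>"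
      using K by (intro profit_lt_of_Lcut_eq_one[OF g _ k _ p \<beta>]) (auto simp: L)
    then show ?thesis using top by linarith
  next
    case 2
    then show ?thesis
      using profit_le_of_Lcut_eq[of f k K' p \<beta> c g] p k \<beta> c Gamma phi
      by (simp add: L LK' less_imp_le)
  next
    case 3
    then show ?thesis using top profit_eq_of_Lcut_eq_zero[OF g(1) _ p] K by (simp add: L)
  qed
  then show "profit \<beta> c f g p k \<le> profit \<beta> c f g (1 / 2) K'"
    and "profit \<beta> c f g (1 / 2) K' \<le> profit \<beta> c f g p k \<Longrightarrow> Lcut f k = e" by auto
qed

lemma is_optimum_three_level_Lcut:
  shows "is_optimum \<beta> c f g (1 / 2) K'"
    and "is_optimum \<beta> c f g p k \<Longrightarrow> Lcut f k = e \<and> profit \<beta> c f g p k = profit \<beta> c f g (1 / 2) K'"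
proof -
  show opt: "is_optimum \<beta> c f g (1 / 2) K'"
    unfolding is_optimum_def using profit_le_three_level_Lcut(1) K by auto
  show "Lcut f k = e \<and> profit \<beta> c f g p k = profit \<beta> c f g (1 / 2) K'"
    if "is_optimum \<beta> c f g p k"
    using that opt profit_le_three_level_Lcut unfolding is_optimum_def by (meson order.antisym)
qed

end

section \<open>A denser network\<close>

lemma Gamma_shift_mix_bounds:
  assumes g: "degree_dist g" and w: "0 \<le> w" "w \<le> 1" and e: "0 \<le> e" "e \<le> 1"
    and near: "e * (mean_deg g + s) \<le> \<epsilon>" and far: "(1 - e) ^ M \<le> \<epsilon>"
  shows "w - \<epsilon> \<le> Gamma (mix_dist w (shift_dist s g) (shift_dist M g)) e"
    and "Gamma (mix_dist w (shift_dist s g) (shift_dist M g)) e \<le> w + \<epsilon>"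
proof -
  define \<Gamma>\<^sub>s where "\<Gamma>\<^sub>s = Gamma (shift_dist s g) e"
  define \<Gamma>\<^sub>M where "\<Gamma>\<^sub>M = Gamma (shift_dist M g) e"
  have mix: "Gamma (mix_dist w (shift_dist s g) (shift_dist M g)) e = (1 - w) * \<Gamma>\<^sub>s + w * \<Gamma>\<^sub>M"
    unfolding \<Gamma>\<^sub>s_def \<Gamma>\<^sub>M_def using g e by (intro Gamma_mix_dist degree_dist_shift_dist)
  have s: "0 \<le> \<Gamma>\<^sub>s" "\<Gamma>\<^sub>s \<le> \<epsilon>"
    using Gamma_nonneg[OF degree_dist_shift_dist[OF g] e, of s]
      Gamma_le_mult_mean[OF degree_dist_shift_dist[OF g] e, of s] near
    by (simp_all add: \<Gamma>\<^sub>s_def mean_deg_shift_dist[OF g])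
  have M: "1 - \<epsilon> \<le> \<Gamma>\<^sub>M" "\<Gamma>\<^sub>M \<le> 1"
    using Gamma_shift_dist_ge[OF g e, of M] Gamma_le_one[OF degree_dist_shift_dist[OF g] e, of M] far
    by (simp_all add: \<Gamma>\<^sub>M_def)
  have "(1 - w) * \<Gamma>\<^sub>s \<le> 1 * \<epsilon>" "w * \<Gamma>\<^sub>M \<le> w"
    using s M w by (intro mult_mono mult_left_le; simp)+
  then show "Gamma (mix_dist w (shift_dist s g) (shift_dist M g)) e \<le> w + \<epsilon>"
    unfolding mix by linarith
  have "w * \<epsilon> \<le> \<epsilon>" "w * (1 - \<epsilon>) \<le> w * \<Gamma>\<^sub>M" "0 \<le> (1 - w) * \<Gamma>\<^sub>s"
    using s M w by (intro mult_left_le_one_le mult_left_mono mult_nonneg_nonneg; simp)+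
  then show "w - \<epsilon> \<le> Gamma (mix_dist w (shift_dist s g) (shift_dist M g)) e"
    unfolding mix by (simp add: algebra_simps)
qed

lemma power_one_minus_le_inverse:
  fixes e :: real
  assumes "0 < e" "e \<le> 1" "0 < n"
  shows "(1 - e) ^ n \<le> 1 / (real n * e)"
proof -
  have "0 \<le> (1 - e) ^ n" using assms by simp
  then have "real n * e * (1 - e) ^ n \<le> 1"
    using mult_power_le_one_sub_power[of e n] assms by linarith
  then show ?thesis using assms by (simp add: field_simps)
qed

lemma two_point_mean_solution:
  fixes A B a b \<epsilon> :: real and K :: nat
  assumes "0 < B" "0 \<le> a" "0 < \<epsilon>"
  obtains M K' e where "b < real M" "M \<le> K'" "K < K'" "0 < e" "e < 1"
    "(1 - e) * real K + e * real K' = A + B * real M" "e * a \<le> \<epsilon>" "(1 - e) ^ M \<le> \<epsilon>"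
proof -
  obtain t :: nat where t: "max B (B * a / \<epsilon>) < real t"
    using reals_Archimedean2 by blast
  then have t_pos: "0 < real t" and "B / real t < 1" "B / real t * a < \<epsilon>"
    using assms by (auto simp: field_simps)
  \<comment> \<open>With \<open>M = n\<close> and \<open>K' = t n\<close> the mean equation is solved by \<open>e n\<close>, which tends to \<open>B / t\<close>:
    \<open>e n\<close> is small for large \<open>t\<close>, while \<open>e n * n\<close> diverges.\<close>
  define e where "e n = (A + B * real n - real K) / (real t * real n - real K)" for n
  have e_lim: "e \<longlonglongrightarrow> B / real t"
    unfolding e_def using t_pos by (real_asymp simp: divide_inverse)
  have "filterlim (\<lambda>n. e n * real n) at_top sequentially"
    using filterlim_tendsto_pos_mult_at_top[OF e_lim _ filterlim_real_sequentially] assms t_pos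
    by simp
  then have "\<forall>\<^sub>F n in sequentially. 1 / \<epsilon> \<le> e n * real n"
    by (simp add: filterlim_at_top)
  moreover have "\<forall>\<^sub>F n in sequentially. 0 < e n" "\<forall>\<^sub>F n in sequentially. e n < 1"
    using e_lim assms t_pos \<open>B / real t < 1\<close> by (auto intro: order_tendstoD)
  moreover have "\<forall>\<^sub>F n in sequentially. e n * a < \<epsilon>"
    using tendsto_mult_right[OF e_lim, of a] \<open>B / real t * a < \<epsilon>\<close>
    by (intro order_tendstoD(2)) (auto simp: mult.commute)
  moreover have "\<forall>\<^sub>F n in sequentially. max b (real K) < real n"
    using filterlim_real_sequentially unfolding filterlim_at_top_dense by blast
  ultimately have "\<forall>\<^sub>F n in sequentially. 1 / \<epsilon> \<le> e n * real n \<and> 0 < e n \<and> e n < 1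
      \<and> e n * a < \<epsilon> \<and> max b (real K) < real n"
    by eventually_elim auto
  then obtain n where n: "1 / \<epsilon> \<le> e n * real n" "0 < e n" "e n < 1" "e n * a < \<epsilon>"
    "b < real n" "K < n"
    unfolding eventually_sequentially by auto
  have "n \<le> t * n"
    using t_pos by simp
  with n(6) have "K < t * n" by linarith
  then have tn: "real K < real t * real n"
    by (metis of_nat_less_iff of_nat_mult)
  have "1 / (real n * e n) \<le> \<epsilon>"
    using n(1,2,6) assms(3) by (simp add: field_simps)
  then have "(1 - e n) ^ n \<le> \<epsilon>"
    using power_one_minus_le_inverse[of "e n" n] n by linarith
  moreover have "(1 - e n) * real K + e n * real (t * n) = real K + e n * (real t * real n - real K)"
    by (simp add: algebra_simps)
  moreover have "e n * (real t * real n - real K) = A + B * real n - real K"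
    using tn by (simp add: e_def)
  ultimately show ?thesis
    using n \<open>n \<le> t * n\<close> \<open>K < t * n\<close> by (intro that[of n "t * n" "e n"]) simp_all
qed

lemma Lcut_two_point_dist:
  assumes "1 \<le> K" "K < K'"
  shows "Lcut (mix_dist e (point_dist K) (point_dist K')) kc
    = (if kc \<le> K then 1 else if kc \<le> K' then e else 0)"
  using assms by (simp add: Lcut_def tail_mix_dist degree_dist_point_dist tail_point_dist)

lemma fosd_two_point_dist:
  assumes "degree_dist f" "\<And>k. K < k \<Longrightarrow> f k = 0" "1 \<le> K" "K < K'" "0 \<le> e" "e \<le> 1"
  shows "fosd (mix_dist e (point_dist K) (point_dist K')) f"
proof (rule fosd_mix_dist)
  show "degree_dist (point_dist K)" "degree_dist (point_dist K')"
    using assms by (simp_all add: degree_dist_point_dist)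
  show "fosd (point_dist K) f" "fosd (point_dist K') f"
    using assms by (simp_all add: fosd_point_dist)
qed (use assms in auto)

lemma shift_mix_dist_eq_zero:
  "degree_dist g \<Longrightarrow> s \<le> M \<Longrightarrow> k \<le> s \<Longrightarrow> mix_dist w (shift_dist s g) (shift_dist M g) k = 0"
  by (simp add: mix_dist_def shift_dist_eq_zero)

lemma denser_network_optimum:
  fixes K K' M s :: nat and e \<epsilon> X q :: real and g :: "nat \<Rightarrow> real"
  defines "f' \<equiv> mix_dist e (point_dist K) (point_dist K')"
    and "g' \<equiv> mix_dist (X - 2 * \<epsilon>) (shift_dist s g) (shift_dist M g)"
  assumes \<beta>: "0 < \<beta>" and c: "0 < c" and g: "degree_dist g" and X: "X \<le> 1"
    and \<epsilon>: "0 < \<epsilon>" "\<epsilon> \<le> X / 4" "\<epsilon> \<le> X * q / 4"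
    and K: "1 \<le> K" "real K < 4 * c * (real s + 1)" "K < K'"
    and M: "s \<le> M" "c / \<epsilon>\<^sup>2 < real M" "M \<le> K'"
    and e: "0 < e" "e < 1" and near: "e * (mean_deg g + s) \<le> \<epsilon>" and far: "(1 - e) ^ M \<le> \<epsilon>"
  shows "is_optimum \<beta> c f' g' (1 / 2) K'"
    and "is_optimum \<beta> c f' g' p k \<Longrightarrow>
      1 - \<beta> + \<beta> * X * (1 / 4 - q / 2) < profit \<beta> c f' g' p k \<and> Gamma g' (Lcut f' k) < X"
proof -
  have g': "degree_dist g'"
    using g \<epsilon> X by (simp add: g'_def degree_dist_mix_dist degree_dist_shift_dist)
  have support: "\<And>k. k \<le> s \<Longrightarrow> g' k = 0"
    using g M by (simp add: g'_def shift_mix_dist_eq_zero)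
  have L: "\<And>kc. Lcut f' kc = (if kc \<le> K then 1 else if kc \<le> K' then e else 0)"
    using K by (simp add: f'_def Lcut_two_point_dist)
  have reach: "X - 3 * \<epsilon> \<le> Gamma g' e" "Gamma g' e \<le> X - \<epsilon>"
    using Gamma_shift_mix_bounds[OF g _ _ _ _ near far, of "X - 2 * \<epsilon>"] \<epsilon> X e
    by (simp_all add: g'_def)
  then have phi: "\<epsilon> \<le> phi_base g' e"
    using one_sub_Gamma_le_phi_base[OF g' e(1)] X e by simp
  define C where "C = c / (real K' * phi_base g' e)"
  have "0 < real M"
    using M(2) c \<epsilon>(1) by (meson divide_pos_pos less_trans zero_less_power)
  then have "C \<le> c / (real M * \<epsilon>)"
    unfolding C_def using c \<epsilon> phi M by (intro divide_left_mono mult_mono mult_pos_pos) auto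
  also have "\<dots> < \<epsilon>"
    using M \<epsilon> \<open>0 < real M\<close> by (simp add: field_simps power2_eq_square)
  finally have C: "0 \<le> C" "C < \<epsilon>"
    using c \<epsilon> phi by (simp_all add: C_def)
  then have "c / (real K' * phi_base g' e) < 1 / 4"
    using \<epsilon> X unfolding C_def by linarith
  note optimum = is_optimum_three_level_Lcut[OF \<beta> c g' _ K(2,3) L e(1) less_imp_le[OF e(2)] this]
  have "0 \<le> Gamma g' e" "Gamma g' e \<le> 1"
    using Gamma_nonneg[OF g'] Gamma_le_one[OF g'] e by simp_all
  then have "Gamma g' e * C \<le> C"
    using C by (intro mult_left_le_one_le)
  moreover have "X * (1 / 4 - q / 2) = X / 4 - X * q / 2"
    "Gamma g' e * (1 / 4 - C) = Gamma g' e / 4 - Gamma g' e * C"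
    by (simp_all add: algebra_simps)
  ultimately have "X * (1 / 4 - q / 2) < Gamma g' e * (1 / 4 - C)"
    using reach(1) C \<epsilon> by linarith
  then have gain: "1 - \<beta> + \<beta> * X * (1 / 4 - q / 2) < profit \<beta> c f' g' (1 / 2) K'"
    using \<beta> K by (simp add: profit_eq L C_def mult.assoc)
  show "is_optimum \<beta> c f' g' (1 / 2) K'"
    by (rule optimum(1)) (rule support)
  show "1 - \<beta> + \<beta> * X * (1 / 4 - q / 2) < profit \<beta> c f' g' p k \<and> Gamma g' (Lcut f' k) < X"
    if "is_optimum \<beta> c f' g' p k"
    using optimum(2)[OF support that] gain reach(2) \<epsilon> by simp
qed

lemma exists_denser_network:
  assumes \<beta>: "0 < \<beta>" "\<beta> < 1" and c: "0 < c" and f: "degree_dist f" and g: "degree_dist g"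
    and fin: "finite {k. f k \<noteq> 0}" and X: "0 < X" "X \<le> 1" and q: "0 < q"
  shows "\<exists>f' g'. degree_dist f' \<and> degree_dist g' \<and> fosd f' f \<and> fosd g' g
     \<and> (1 - \<beta>) * mean_deg f' = \<beta> * mean_deg g'
     \<and> (\<exists>p' k'. is_optimum \<beta> c f' g' p' k')
     \<and> (\<forall>p' k'. is_optimum \<beta> c f' g' p' k' \<longrightarrow>
          1 - \<beta> + \<beta> * X * (1 / 4 - q / 2) < profit \<beta> c f' g' p' k' \<and> Gamma g' (Lcut f' k') < X)"
proof -
  obtain K0 where K0: "\<And>k. f k \<noteq> 0 \<Longrightarrow> k \<le> K0"
    using fin unfolding finite_nat_set_iff_bounded_le by blast
  define K where "K = Suc K0"
  have K: "1 \<le> K" "\<And>k. K < k \<Longrightarrow> f k = 0"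
    using K0 unfolding K_def by (simp, meson Suc_lessD leD)
  obtain s :: nat where "real K / (4 * c) < real s"
    using reals_Archimedean2 by blast
  then have s: "real K < 4 * c * (real s + 1)"
    using c by (simp add: field_simps)
  define \<epsilon> where "\<epsilon> = min (X / 4) (X * q / 4)"
  define w where "w = X - 2 * \<epsilon>"
  have \<epsilon>: "0 < \<epsilon>" "\<epsilon> \<le> X / 4" "\<epsilon> \<le> X * q / 4"
    using X q by (auto simp: \<epsilon>_def)
  then have w: "0 < w" "w \<le> 1"
    using X by (simp_all add: w_def)
  define mg where "mg = mean_deg g"
  have "0 < \<beta> * w / (1 - \<beta>)" "0 \<le> mg + s"
    using \<beta> w mean_deg_nonneg[OF g] by (simp_all add: mg_def)
  then obtain M K' :: nat and e :: real where M: "max s (c / \<epsilon>\<^sup>2) < real M" "M \<le> K'" "K < K'"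
    and e: "0 < e" "e < 1" and near: "e * (mg + s) \<le> \<epsilon>" and far: "(1 - e) ^ M \<le> \<epsilon>"
    and balance: "(1 - e) * K + e * K' = \<beta> * (mg + (1 - w) * s) / (1 - \<beta>) + \<beta> * w / (1 - \<beta>) * M"
    using \<epsilon>(1) by (rule two_point_mean_solution[where A = "\<beta> * (mg + (1 - w) * s) / (1 - \<beta>)"
        and b = "max s (c / \<epsilon>\<^sup>2)" and K = K])
  define f' where "f' = mix_dist e (point_dist K) (point_dist K')"
  define g' where "g' = mix_dist w (shift_dist s g) (shift_dist M g)"
  have f': "degree_dist f'" "fosd f' f" "mean_deg f' = (1 - e) * K + e * K'"
    using K M e f by (simp_all add: f'_def degree_dist_mix_dist degree_dist_point_dist
        fosd_two_point_dist mean_deg_mix_dist mean_deg_point_dist)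
  have g': "degree_dist g'" "fosd g' g" "mean_deg g' = mg + (1 - w) * s + w * M"
    using g w by (simp_all add: g'_def mg_def degree_dist_mix_dist degree_dist_shift_dist fosd_mix_dist
        fosd_shift_dist mean_deg_mix_dist mean_deg_shift_dist algebra_simps)
  have "(1 - \<beta>) * mean_deg f'
      = (1 - \<beta>) * (\<beta> * (mg + (1 - w) * s) / (1 - \<beta>)) + (1 - \<beta>) * (\<beta> * w / (1 - \<beta>)) * M"
    by (simp only: f'(3) balance distrib_left mult.assoc)
  also have "\<dots> = \<beta> * (mg + (1 - w) * s) + \<beta> * w * M"
    using \<beta> by simp
  also have "\<dots> = \<beta> * mean_deg g'"
    by (simp add: g'(3) algebra_simps)
  finally have balanced: "(1 - \<beta>) * mean_deg f' = \<beta> * mean_deg g'" .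
  have "s \<le> M" "c / \<epsilon>\<^sup>2 < real M"
    using M(1) by auto
  note optimum = denser_network_optimum[where g = g and q = q,
      OF \<beta>(1) c g X(2) \<epsilon> K(1) s M(3) this M(2) e near[unfolded mg_def] far, folded w_def f'_def,
      folded g'_def]
  show ?thesis
  proof (intro exI conjI allI impI)
    show "is_optimum \<beta> c f' g' (1 / 2) K'"
      by (rule optimum(1))
  qed (use f' g' balanced optimum(2) in simp_all)
qed

theorem proposition4:
  fixes \<beta> c \<delta> :: real and f g :: "nat \<Rightarrow> real" and kstar :: nat
  assumes beta: "0 < \<beta>" "\<beta> < 1"
    and cpos: "0 < c"
    and f: "degree_dist f" and g: "degree_dist g"
    and balance: "(1 - \<beta>) * mean_deg f = \<beta> * mean_deg g"
    and kfmax_finite: "finite {k. f k \<noteq> 0}"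
    and opt: "is_optimum \<beta> c f g (1/2) kstar"
    and Gam: "Gamma g (Lcut f kstar) = 1 - \<delta>"
    and delta: "\<delta> < 2 * c / (real kstar * phi g (Lcut f kstar) (1/2))"
  shows "\<exists>f' g'. degree_dist f' \<and> degree_dist g' \<and> fosd f' f \<and> fosd g' g
     \<and> (1 - \<beta>) * mean_deg f' = \<beta> * mean_deg g'
     \<and> (\<exists>p' k'. is_optimum \<beta> c f' g' p' k')
     \<and> (\<forall>p' k'. is_optimum \<beta> c f' g' p' k' \<longrightarrow>
          profit \<beta> c f' g' p' k' > profit \<beta> c f g (1/2) kstar
          \<and> Gamma g' (Lcut f' k') < 1 - \<delta>)"
proof -
  \<comment> \<open>The bound on \<open>\<delta>\<close> is only needed for \<open>kstar * phi > 0\<close>.\<close>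
  define L0 where "L0 = Lcut f kstar"
  define q where "q = c / (real kstar * phi g L0 (1 / 2))"
  have L0: "0 \<le> L0" "L0 \<le> 1"
    using tail_nonneg[OF f] tail_le_one[OF f] by (simp_all add: L0_def Lcut_def)
  have "0 \<le> \<delta>"
    using Gamma_le_one[OF g L0] Gam by (simp add: L0_def)
  with delta have q: "0 < q"
    by (simp add: q_def L0_def)
  then have "L0 \<noteq> 0"
    by (auto simp: q_def phi_eq phi_base_zero)
  then have X: "0 < 1 - \<delta>" "1 - \<delta> \<le> 1"
    using Gamma_ge_self[OF g L0] Gamma_le_one[OF g L0] L0 \<open>0 \<le> \<delta>\<close> Gam by (simp_all add: L0_def)
  have "profit \<beta> c f g (1 / 2) kstar = 1 - \<beta> + \<beta> * (1 - \<delta>) * (1 / 4 - q / 2)"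
    by (simp add: profit_def q_def L0_def Gam algebra_simps)
  then show ?thesis
    using exists_denser_network[OF beta cpos f g kfmax_finite X q] by simp
qed

end
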